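(* Let $\ell>0$, $\varepsilon>0$ and $v_->0$, $u_\pm>0$ be given, and set $v_*:=v_-$. Let $P\in C^2(\mathbb{R}^+)$ and $\nu\in C^1(\mathbb{R}^+)$ satisfy, for all $u>0$, $$P(0)=0,\quad P(+\infty)=+\infty,\quad P'(u)>0,\quad P''(u)>0,\quad \nu(u)>0.$$ Set $f(u):=u\int_0^u \frac{P(z)}{z^2}\,dz$ and assume $$v_*^2\,(u_+-u_-)=u_-\,u_+\,\big(P(u_+)-P(u_-)\big)\qquad\text{and}\qquad \Big(\frac{v_*^3}{2u_+^2}+v_*f'(u_+)\Big)-\Big(\frac{v_*^3}{2u_-^2}+v_*f'(u_-)\Big)\le 0.$$ Consider the initial-boundary value problem $$u_t+v_x=0,\qquad v_t+\Big\{\frac{v^2}{u}+P(u)-\varepsilon\,\nu(u)\Big(\frac{v}{u}\Big)_x\Big\}_x=0,\qquad x\in(-\ell,\ell),\ t\ge0,$$ with $u(\pm\ell,t)=u_\pm$, $v(-\ell,t)=v_-$ for $t\ge0$ and $u(x,0)=u_0(x)$, $v(x,0)=v_0(x)$. Then there exists a unique stationary solution $(\bar u(x),\bar v(x))$ of this problem, i.e. a unique time-independent solution of the boundary value problem $$v_x=0,\qquad \Big\{\frac{v^2}{u}+P(u)-\varepsilon\,\nu(u)\Big(\frac{v}{u}\Big)_x\Big\}_x=0\ \text{ on }(-\ell,\ell),\qquad u(\pm\ell)=u_\pm,\quad v(-\ell)=v_-.$$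
   Context: Here $u$ is the fluid density and $v$ the momentum (for a compressible isentropic fluid with density-dependent viscosity $\nu$). Since $v_x=0$, the second component of a stationary solution is the constant $v_*=v_-$; the second displayed condition is the entropy jump condition $[\![\frac{v^3}{2u^2}+vf'(u)]\!]\le0$ with $v_+=v_-=v_*$, where $[\![g]\!]$ denotes the value at $(u_+,v_* )$ minus the value at $(u_-,v_* )$. *)

theory Defs
  imports "HOL-Analysis.Analysis"
begin

definition f_of :: "(real \<Rightarrow> real) \<Rightarrow> real \<Rightarrow> real" where
  "f_of P u = u * integral {0..u} (\<lambda>z. P z / z\<^sup>2)"

definition stationary_solution ::
  "(real \<Rightarrow> real) \<Rightarrow> (real \<Rightarrow> real) \<Rightarrow> real \<Rightarrow> real \<Rightarrow> real \<Rightarrow> real \<Rightarrow> real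
   \<Rightarrow> (real \<Rightarrow> real) \<Rightarrow> (real \<Rightarrow> real) \<Rightarrow> bool" where
  "stationary_solution P \<nu> \<epsilon> l um up vm u v \<longleftrightarrow>
     continuous_on {-l..l} u \<and> continuous_on {-l..l} v \<and>
     (\<forall>x\<in>{-l..l}. u x > 0) \<and>
     (\<forall>x\<in>{-l<..<l}. u differentiable (at x)) \<and>
     (\<forall>x\<in>{-l<..<l}. (v has_real_derivative 0) (at x)) \<and>
     (\<forall>x\<in>{-l<..<l}.
        ((\<lambda>y. (v y)\<^sup>2 / u y + P (u y) - \<epsilon> * \<nu> (u y) * deriv (\<lambda>z. v z / u z) y)
           has_real_derivative 0) (at x)) \<and>
     u (-l) = um \<and> u l = up \<and> v (-l) = vm"

end

theory Submission
  imports Defs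
begin

text \<open>
  Since \<open>v\<^sub>x = 0\<close>, a stationary solution has \<open>v \<equiv> v\<^sub>-\<close>, and the momentum flux is a constant \<open>C\<close>.
  Solving for \<open>u\<^sub>x\<close> turns the problem into the autonomous two-point problem
  \<open>u\<^sub>x = h(u) (C - g(u))\<close>, \<open>u(\<plusminus>\<ell>) = u\<^sub>\<plusminus>\<close>, with \<open>h(u) = u\<^sup>2 / (\<epsilon> v\<^sub>- \<nu>(u)) > 0\<close> and
  \<open>g(u) = v\<^sub>-\<^sup>2 / u + P(u)\<close>; the Rankine-Hugoniot condition says exactly \<open>g(u\<^sub>-) = g(u\<^sub>+)\<close>.

  Existence: for \<open>C\<close> above the maximum of \<open>g\<close> between \<open>u\<^sub>-\<close> and \<open>u\<^sub>+\<close> (below the minimum if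
  \<open>u\<^sub>+ < u\<^sub>-\<close>) the equation is solved by separation of variables, and the length
  \<open>\<integral> ds / (h(s) (C - g(s)))\<close> of the \<open>x\<close>-interval it needs depends continuously on \<open>C\<close>. It tends to
  \<open>0\<close> as \<open>C \<rightarrow> \<infinity>\<close> and diverges logarithmically as \<open>C\<close> approaches the extreme value of the
  Lipschitz function \<open>g\<close>; since \<open>g(u\<^sub>-) = g(u\<^sub>+)\<close>, that value is attained at a point with room
  to its right, where the divergence is measured. So some \<open>C\<close> gives length \<open>2\<ell>\<close>.

  Uniqueness: the right-hand side is strictly increasing in \<open>C\<close>, so two solutions with the
  same boundary values must have the same \<open>C\<close> (their difference could not return to zero),
  and then they coincide by Gronwall's inequality.
\<close>

lemma C1_differentiable_onI:
  fixes f :: "real \<Rightarrow> real"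
  assumes "\<And>x. x \<in> S \<Longrightarrow> (f has_real_derivative f' x) (at x)" "continuous_on S f'"
  shows "f C1_differentiable_on S"
  using assms by (auto simp: C1_differentiable_on_def has_real_derivative_iff_has_vector_derivative)

lemma C1_differentiable_on_divide [derivative_intros]:
  fixes f g :: "real \<Rightarrow> real"
  assumes "f C1_differentiable_on S" "g C1_differentiable_on S" "\<And>x. x \<in> S \<Longrightarrow> g x \<noteq> 0"
  shows "(\<lambda>x. f x / g x) C1_differentiable_on S"
proof -
  obtain f' g' where f': "\<And>x. x \<in> S \<Longrightarrow> (f has_real_derivative f' x) (at x)" "continuous_on S f'"
    and g': "\<And>x. x \<in> S \<Longrightarrow> (g has_real_derivative g' x) (at x)" "continuous_on S g'"
    using assms(1,2) by (auto simp: C1_differentiable_on_def has_real_derivative_iff_has_vector_derivative)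
  have "continuous_on S f" "continuous_on S g"
    using f'(1) g'(1) by (auto intro!: continuous_at_imp_continuous_on DERIV_isCont)
  show ?thesis
  proof (rule C1_differentiable_onI)
    show "((\<lambda>x. f x / g x) has_real_derivative (f' x * g x - f x * g' x) / (g x * g x)) (at x)"
      if "x \<in> S" for x
      using f'(1)[OF that] g'(1)[OF that] assms(3)[OF that] by (rule DERIV_divide)
    show "continuous_on S (\<lambda>x. (f' x * g x - f x * g' x) / (g x * g x))"
      using \<open>continuous_on S f\<close> \<open>continuous_on S g\<close> f'(2) g'(2) assms(3)
      by (auto intro!: continuous_intros)
  qed
qed

lemma C1_differentiable_on_imp_lipschitz_on:
  fixes f :: "real \<Rightarrow> real"
  assumes "f C1_differentiable_on S" "compact K" "convex K" "K \<subseteq> S"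
  obtains L where "L-lipschitz_on K f"
proof -
  obtain D where D: "\<And>x. x \<in> S \<Longrightarrow> (f has_real_derivative D x) (at x)" "continuous_on S D"
    using assms(1) by (auto simp: C1_differentiable_on_def has_real_derivative_iff_has_vector_derivative)
  have "compact (D ` K)"
    using D(2) assms(2,4) by (intro compact_continuous_image) (rule continuous_on_subset)
  then obtain B where B: "\<And>x. x \<in> K \<Longrightarrow> \<bar>D x\<bar> \<le> B"
    by (metis compact_imp_bounded bounded_real imageI)
  have "(max B 0)-lipschitz_on K f"
  proof (rule bounded_derivative_imp_lipschitz[OF _ \<open>convex K\<close>])
    fix x assume x: "x \<in> K"
    then show "(f has_derivative (*) (D x)) (at x within K)"
      using D(1)[of x] assms(4) unfolding has_field_derivative_def
      by (blast intro: has_derivative_at_withinI)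
    show "onorm ((*) (D x)) \<le> max B 0"
      using B[OF x] by (intro onorm_bound) (auto simp: abs_mult intro: mult_right_mono)
  qed auto
  then show ?thesis by (rule that)
qed

lemma no_downcrossing_if_increasing_at_zeros:
  fixes d e :: "real \<Rightarrow> real"
  assumes "a < b" and cont: "continuous_on {a..b} d" and "d a > 0" "d b < 0"
    and deriv: "\<And>x. x \<in> {a<..<b} \<Longrightarrow> (d has_real_derivative e x) (at x)"
    and zeros: "\<And>x. x \<in> {a<..<b} \<Longrightarrow> d x = 0 \<Longrightarrow> e x > 0"
  shows False
proof -
  \<comment> \<open>At the least zero \<open>z\<close>, \<open>d\<close> is negative just left of \<open>z\<close>, so there is an earlier zero.\<close>
  define Z where "Z = {x \<in> {a..b}. d x = 0}"
  have "closed Z"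
    unfolding Z_def using cont by (rule continuous_closed_preimage_constant) simp
  moreover have "bounded Z"
    by (rule bounded_subset[of "{a..b}"]) (auto simp: Z_def)
  ultimately have "compact Z"
    by (simp add: compact_eq_bounded_closed)
  moreover have "Z \<noteq> {}"
  proof -
    obtain x where "a \<le> x" "x \<le> b" "d x = 0"
      using IVT2'[of d b 0 a] assms(1-4) by auto
    then show ?thesis by (auto simp: Z_def)
  qed
  ultimately obtain z where z: "z \<in> Z" and least: "\<And>y. y \<in> Z \<Longrightarrow> z \<le> y"
    using compact_attains_inf by metis
  have z_inner: "z \<in> {a<..<b}" and "d z = 0"
    using z assms(3,4) by (auto simp: Z_def less_le)
  then obtain \<delta> where "\<delta> > 0" and left: "\<And>h. 0 < h \<Longrightarrow> h < \<delta> \<Longrightarrow> d (z - h) < 0"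
    using DERIV_pos_inc_left[OF deriv zeros] by metis
  define h where "h = min \<delta> (z - a) / 2"
  have "0 < h" "h < \<delta>" "h < z - a"
    using z_inner \<open>\<delta> > 0\<close> by (auto simp: h_def min_def)
  then have y: "a < z - h" "z - h < z" "d (z - h) < 0"
    using left by auto
  then obtain x where "a \<le> x" "x \<le> z - h" "d x = 0"
    using IVT2'[of d "z - h" 0 a] \<open>d a > 0\<close> z_inner continuous_on_subset[OF cont, of "{a..z - h}"] by auto
  then show False
    using least[of x] y z_inner by (auto simp: Z_def)
qed

lemma continuous_on_positive_nearby:
  fixes e :: "real \<Rightarrow> real"
  assumes "continuous_on S e" "c \<in> S" "e c > 0"
  obtains \<delta> where "\<delta> > 0" "\<And>x. x \<in> S \<Longrightarrow> \<bar>x - c\<bar> < \<delta> \<Longrightarrow> e x > 0"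
proof -
  obtain \<delta> where "\<delta> > 0" "\<forall>x\<in>S. dist x c < \<delta> \<longrightarrow> dist (e x) (e c) < e c"
    using assms unfolding continuous_on_iff by blast
  then show ?thesis
    by (intro that[of \<delta>]) (auto simp: dist_real_def abs_diff_less_iff)
qed

lemma ordered_vector_fields_no_common_boundary_values:
  fixes u1 u2 F1 F2 :: "real \<Rightarrow> real"
  assumes "a < b"
    and cont1: "continuous_on {a..b} u1" and cont2: "continuous_on {a..b} u2"
    and range1: "u1 ` {a..b} \<subseteq> S" and range2: "u2 ` {a..b} \<subseteq> S"
    and "continuous_on S F1" "continuous_on S F2"
    and less: "\<And>s. s \<in> S \<Longrightarrow> F2 s < F1 s"
    and ode1: "\<And>x. x \<in> {a<..<b} \<Longrightarrow> (u1 has_real_derivative F1 (u1 x)) (at x)"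
    and ode2: "\<And>x. x \<in> {a<..<b} \<Longrightarrow> (u2 has_real_derivative F2 (u2 x)) (at x)"
    and left: "u1 a = u2 a" and right: "u1 b = u2 b"
  shows False
proof -
  \<comment> \<open>\<open>d = u1 - u2\<close> vanishes at both ends, and \<open>d' > 0\<close> near both ends and at every zero of \<open>d\<close>.\<close>
  define d where "d x = u1 x - u2 x" for x
  define e where "e x = F1 (u1 x) - F2 (u2 x)" for x
  have deriv: "(d has_real_derivative e x) (at x)" if "x \<in> {a<..<b}" for x
    unfolding d_def e_def using ode1[OF that] ode2[OF that] by (rule DERIV_diff)
  have cont_d: "continuous_on {a..b} d"
    unfolding d_def using cont1 cont2 by (intro continuous_intros)
  have cont_e: "continuous_on {a..b} e"
    unfolding e_def
    using continuous_on_compose2[OF \<open>continuous_on S F1\<close> cont1 range1]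
      continuous_on_compose2[OF \<open>continuous_on S F2\<close> cont2 range2]
    by (rule continuous_on_diff)
  have "e a > 0" "e b > 0"
    using left right less range2 \<open>a < b\<close> by (auto simp: e_def image_subset_iff)
  then obtain \<delta>a \<delta>b where "\<delta>a > 0" "\<delta>b > 0"
    and pos_a: "\<And>x. x \<in> {a..b} \<Longrightarrow> \<bar>x - a\<bar> < \<delta>a \<Longrightarrow> e x > 0"
    and pos_b: "\<And>x. x \<in> {a..b} \<Longrightarrow> \<bar>x - b\<bar> < \<delta>b \<Longrightarrow> e x > 0"
    using continuous_on_positive_nearby[OF cont_e, of a] continuous_on_positive_nearby[OF cont_e, of b]
      \<open>a < b\<close> by (metis atLeastAtMost_iff order_refl order_less_imp_le)
  define r where "r = min (min \<delta>a \<delta>b) (b - a) / 3"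
  have r: "0 < r" "r < \<delta>a" "r < \<delta>b" "a + r < b - r"
    using \<open>\<delta>a > 0\<close> \<open>\<delta>b > 0\<close> \<open>a < b\<close> by (auto simp: r_def min_def field_simps)
  have "d a < d (a + r)"
  proof (rule DERIV_pos_imp_increasing_open[of a "a + r" d])
    show "\<exists>y. DERIV d x :> y \<and> y > 0" if "a < x" "x < a + r" for x
      using that r by (intro exI[of _ "e x"] conjI deriv pos_a) auto
  qed (use r in \<open>auto intro: continuous_on_subset[OF cont_d]\<close>)
  moreover have "d (b - r) < d b"
  proof (rule DERIV_pos_imp_increasing_open[of "b - r" b d])
    show "\<exists>y. DERIV d x :> y \<and> y > 0" if "b - r < x" "x < b" for x
      using that r by (intro exI[of _ "e x"] conjI deriv pos_b) auto
  qed (use r in \<open>auto intro: continuous_on_subset[OF cont_d]\<close>)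
  moreover have "d a = 0" "d b = 0"
    using left right by (auto simp: d_def)
  ultimately show False
    using r less range2 deriv
    by (intro no_downcrossing_if_increasing_at_zeros[of "a + r" "b - r" d e]
        continuous_on_subset[OF cont_d]) (auto simp: d_def e_def image_subset_iff)
qed

lemma lipschitz_ode_solutions_unique:
  fixes u1 u2 F :: "real \<Rightarrow> real"
  assumes cont1: "continuous_on {a..b} u1" and cont2: "continuous_on {a..b} u2"
    and range1: "u1 ` {a..b} \<subseteq> S" and range2: "u2 ` {a..b} \<subseteq> S"
    and lip: "L-lipschitz_on S F"
    and ode1: "\<And>x. x \<in> {a<..<b} \<Longrightarrow> (u1 has_real_derivative F (u1 x)) (at x)"
    and ode2: "\<And>x. x \<in> {a<..<b} \<Longrightarrow> (u2 has_real_derivative F (u2 x)) (at x)"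
    and start: "u1 a = u2 a"
    and x: "x \<in> {a..b}"
  shows "u1 x = u2 x"
proof -
  \<comment> \<open>Gronwall: the weighted energy \<open>z\<close> is non-increasing and vanishes at \<open>a\<close>.\<close>
  define z where "z y = (u1 y - u2 y)\<^sup>2 * exp (-2 * L * y)" for y
  have "z x \<le> z a"
  proof (rule DERIV_nonpos_imp_decreasing_open[of a x z])
    fix y assume y: "a < y" "y < x"
    then have "y \<in> {a<..<b}" using x by auto
    define \<Delta> where "\<Delta> = u1 y - u2 y"
    have "\<bar>F (u1 y) - F (u2 y)\<bar> \<le> L * \<bar>\<Delta>\<bar>"
      using lipschitz_onD[OF lip, of "u1 y" "u2 y"] range1 range2 \<open>y \<in> {a<..<b}\<close>
      by (auto simp: \<Delta>_def dist_real_def image_subset_iff)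
    then have "\<bar>\<Delta>\<bar> * \<bar>F (u1 y) - F (u2 y)\<bar> \<le> \<bar>\<Delta>\<bar> * (L * \<bar>\<Delta>\<bar>)"
      by (rule mult_left_mono) simp
    then have "\<Delta> * (F (u1 y) - F (u2 y)) \<le> L * \<Delta>\<^sup>2"
      using abs_ge_self[of "\<Delta> * (F (u1 y) - F (u2 y))"]
      by (simp add: power2_eq_square abs_mult abs_mult_self mult.left_commute)
    then have "(2 * \<Delta> * (F (u1 y) - F (u2 y)) - \<Delta>\<^sup>2 * (2 * L)) * exp (-2 * L * y) \<le> 0"
      by (intro mult_nonpos_nonneg) (simp_all add: algebra_simps)
    moreover have "(z has_real_derivative
        (2 * \<Delta> * (F (u1 y) - F (u2 y)) - \<Delta>\<^sup>2 * (2 * L)) * exp (-2 * L * y)) (at y)"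
      unfolding z_def \<Delta>_def using ode1[OF \<open>y \<in> _\<close>] ode2[OF \<open>y \<in> _\<close>]
      by (auto intro!: derivative_eq_intros simp: algebra_simps)
    ultimately show "\<exists>z'. (z has_real_derivative z') (at y) \<and> z' \<le> 0" by blast
  qed (use x in \<open>auto simp: z_def intro!: continuous_intros continuous_on_subset[OF cont1]
        continuous_on_subset[OF cont2]\<close>)
  then have "(u1 x - u2 x)\<^sup>2 * exp (-2 * L * x) \<le> 0"
    using start by (simp add: z_def)
  then show ?thesis
    by (simp add: mult_le_0_iff)
qed

lemma monotone_family_bvp_same_parameter:
  fixes F :: "real \<Rightarrow> real \<Rightarrow> real" and u1 u2 :: "real \<Rightarrow> real"
  assumes "a < b"
    and F_mono: "\<And>C C' s. C < C' \<Longrightarrow> s \<in> S \<Longrightarrow> F C s < F C' s"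
    and F_cont: "\<And>C. continuous_on S (F C)"
    and cont1: "continuous_on {a..b} u1" and cont2: "continuous_on {a..b} u2"
    and range1: "u1 ` {a..b} \<subseteq> S" and range2: "u2 ` {a..b} \<subseteq> S"
    and ode1: "\<And>x. x \<in> {a<..<b} \<Longrightarrow> (u1 has_real_derivative F C1 (u1 x)) (at x)"
    and ode2: "\<And>x. x \<in> {a<..<b} \<Longrightarrow> (u2 has_real_derivative F C2 (u2 x)) (at x)"
    and left: "u1 a = u2 a" and right: "u1 b = u2 b"
  shows "C1 = C2"
proof (rule ccontr)
  assume "C1 \<noteq> C2"
  then consider "C2 < C1" | "C1 < C2" by linarith
  then show False
  proof cases
    case 1
    show False
      using 1 F_mono ode1 ode2 left right
      by (intro ordered_vector_fields_no_common_boundary_values[OF \<open>a < b\<close> cont1 cont2 range1 range2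
            F_cont F_cont]) auto
  next
    case 2
    show False
      using 2 F_mono ode1 ode2 left right
      by (intro ordered_vector_fields_no_common_boundary_values[OF \<open>a < b\<close> cont2 cont1 range2 range1
            F_cont F_cont]) auto
  qed
qed

lemma monotone_family_bvp_unique:
  fixes F :: "real \<Rightarrow> real \<Rightarrow> real" and u1 u2 :: "real \<Rightarrow> real"
  assumes "a < b"
    and F_mono: "\<And>C C' s. C < C' \<Longrightarrow> s > 0 \<Longrightarrow> F C s < F C' s"
    and F_cont: "\<And>C. continuous_on {0<..} (F C)"
    and F_lip: "\<And>C m M. m > 0 \<Longrightarrow> \<exists>L. L-lipschitz_on {m..M} (F C)"
    and cont1: "continuous_on {a..b} u1" and cont2: "continuous_on {a..b} u2"
    and pos1: "\<And>x. x \<in> {a..b} \<Longrightarrow> u1 x > 0" and pos2: "\<And>x. x \<in> {a..b} \<Longrightarrow> u2 x > 0"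
    and ode1: "\<And>x. x \<in> {a<..<b} \<Longrightarrow> (u1 has_real_derivative F C1 (u1 x)) (at x)"
    and ode2: "\<And>x. x \<in> {a<..<b} \<Longrightarrow> (u2 has_real_derivative F C2 (u2 x)) (at x)"
    and left: "u1 a = u2 a" and right: "u1 b = u2 b"
    and x: "x \<in> {a..b}"
  shows "u1 x = u2 x"
proof -
  have range: "u1 ` {a..b} \<subseteq> {0<..}" "u2 ` {a..b} \<subseteq> {0<..}"
    using pos1 pos2 by auto
  have "C1 = C2"
    using F_mono by (intro monotone_family_bvp_same_parameter[OF \<open>a < b\<close> _ F_cont cont1 cont2 range
          ode1 ode2 left right]) auto
  define K where "K = u1 ` {a..b} \<union> u2 ` {a..b}"
  have "compact K" "K \<noteq> {}"
    using \<open>a < b\<close> unfolding K_def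
    by (auto intro!: compact_Un compact_continuous_image cont1 cont2)
  then obtain m M where "m \<in> K" "M \<in> K" and bounds: "K \<subseteq> {m..M}"
    using compact_attains_inf[of K] compact_attains_sup[of K] by (metis atLeastAtMost_iff subsetI)
  then have "m > 0"
    using range by (auto simp: K_def)
  then obtain L where "L-lipschitz_on {m..M} (F C1)"
    using F_lip by blast
  then show ?thesis
    using lipschitz_ode_solutions_unique[OF cont1 cont2 _ _ _ ode1 _ left x] ode2 \<open>C1 = C2\<close> bounds
    unfolding K_def by blast
qed

lemma integral_Icc_has_real_derivative_interior:
  fixes k :: "real \<Rightarrow> real"
  assumes "continuous_on {a..b} k" "s \<in> {a<..<b}"
  shows "((\<lambda>t. integral {a..t} k) has_real_derivative k s) (at s)"
proof -
  have "((\<lambda>t. integral {a..t} k) has_real_derivative k s) (at s within {a<..<b})"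
    using assms by (intro DERIV_subset[OF integral_has_real_derivative]) auto
  then show ?thesis
    using at_within_open[of s "{a<..<b}"] assms(2) by simp
qed

lemma integral_Icc_strict_mono:
  fixes k :: "real \<Rightarrow> real"
  assumes cont: "continuous_on {a..b} k" and pos: "\<And>s. s \<in> {a..b} \<Longrightarrow> k s > 0"
    and "s \<in> {a..b}" "t \<in> {a..b}" "s < t"
  shows "integral {a..s} k < integral {a..t} k"
proof (rule DERIV_pos_imp_increasing_open[of s t "\<lambda>t. integral {a..t} k"])
  show "\<exists>y. ((\<lambda>t. integral {a..t} k) has_real_derivative y) (at x) \<and> y > 0" if "s < x" "x < t" for x
    using that assms by (intro exI[of _ "k x"] conjI integral_Icc_has_real_derivative_interior[OF cont] pos)
      auto
  show "continuous_on {s..t} (\<lambda>t. integral {a..t} k)"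
    using assms indefinite_integral_continuous_1[OF integrable_continuous_interval[OF cont]]
    by (auto elim!: continuous_on_subset)
qed fact

lemma strict_mono_continuous_image_Icc:
  fixes X :: "real \<Rightarrow> real"
  assumes "a \<le> b" "continuous_on {a..b} X"
    and strict_mono: "\<And>s t. s \<in> {a..b} \<Longrightarrow> t \<in> {a..b} \<Longrightarrow> s < t \<Longrightarrow> X s < X t"
  shows "X ` {a..b} = {X a..X b}"
proof
  show "X ` {a..b} \<subseteq> {X a..X b}"
    using strict_mono \<open>a \<le> b\<close> by (force simp: le_less)
  show "{X a..X b} \<subseteq> X ` {a..b}"
    using IVT'[of X a _ b] assms(1,2) by fastforce
qed

lemma exists_autonomous_ode_solution:
  fixes k :: "real \<Rightarrow> real"
  assumes "a < b" and cont: "continuous_on {a..b} k" and pos: "\<And>s. s \<in> {a..b} \<Longrightarrow> k s > 0"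
    and length: "integral {a..b} k = d - c"
  obtains w where "continuous_on {c..d} w" "w c = a" "w d = b" "w ` {c..d} \<subseteq> {a..b}"
    "\<And>x. x \<in> {c<..<d} \<Longrightarrow> (w has_real_derivative inverse (k (w x))) (at x)"
proof -
  define X where "X s = c + integral {a..s} k" for s
  have deriv: "(X has_real_derivative k s) (at s)" if "s \<in> {a<..<b}" for s
    unfolding X_def using integral_Icc_has_real_derivative_interior[OF cont that]
    by (auto intro: derivative_eq_intros)
  have cont_X: "continuous_on {a..b} X"
    unfolding X_def using indefinite_integral_continuous_1[OF integrable_continuous_interval[OF cont]]
    by (intro continuous_intros)
  have strict_mono: "X s < X t" if "s \<in> {a..b}" "t \<in> {a..b}" "s < t" for s t
    unfolding X_def using integral_Icc_strict_mono[OF cont pos that] by simp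
  then have inj: "inj_on X {a..b}"
    by (metis inj_onI linorder_neqE_linordered_idom order_less_irrefl)
  have "X a = c" "X b = d"
    using length by (simp_all add: X_def)
  then have image: "X ` {a..b} = {c..d}"
    using strict_mono_continuous_image_Icc[OF _ cont_X strict_mono] \<open>a < b\<close> by simp
  define w where "w = inv_into {a..b} X"
  have w_X: "w (X s) = s" if "s \<in> {a..b}" for s
    unfolding w_def using inv_into_f_f[OF inj that] .
  have X_w: "X (w y) = y" and w_range: "w y \<in> {a..b}" if "y \<in> {c..d}" for y
    unfolding w_def using f_inv_into_f[of y X "{a..b}"] inv_into_into[of y X "{a..b}"] that image by auto
  have cont_w: "continuous_on {c..d} w"
    using continuous_on_inv[OF cont_X compact_Icc, of w] w_X image by auto
  show ?thesis
  proof
    show "w c = a" "w d = b"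
      using w_X[of a] w_X[of b] \<open>X a = c\<close> \<open>X b = d\<close> \<open>a < b\<close> by auto
    show "w ` {c..d} \<subseteq> {a..b}"
      using w_range by auto
    fix x assume x: "x \<in> {c<..<d}"
    then have "w x \<noteq> a" "w x \<noteq> b"
      using X_w[of x] \<open>X a = c\<close> \<open>X b = d\<close> by auto
    then have "w x \<in> {a<..<b}"
      using w_range[of x] x by auto
    moreover have "isCont w x"
      using continuous_on_interior[OF cont_w, of x] x by (simp add: interior_atLeastAtMost_real)
    ultimately show "(w has_real_derivative inverse (k (w x))) (at x)"
      using x pos[of "w x"] X_w
      by (intro DERIV_inverse_function[where f = X and a = c and b = d] deriv) auto
  qed (rule cont_w)
qed

lemma has_integral_inverse_affine:
  fixes \<eta> K s0 b :: real
  assumes "\<eta> > 0" "K > 0" "s0 \<le> b"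
  shows "((\<lambda>s. 1 / (\<eta> + K * (s - s0))) has_integral (ln (\<eta> + K * (b - s0)) - ln \<eta>) / K) {s0..b}"
proof -
  have "((\<lambda>s. ln (\<eta> + K * (s - s0)) / K) has_real_derivative 1 / (\<eta> + K * (s - s0))) (at s)"
    if "s \<in> {s0..b}" for s
  proof -
    have "\<eta> + K * (s - s0) > 0"
      using that assms by (simp add: add_pos_nonneg)
    then show ?thesis
      using \<open>K > 0\<close> by (auto intro!: derivative_eq_intros)
  qed
  then have "((\<lambda>s. 1 / (\<eta> + K * (s - s0))) has_integral
      ln (\<eta> + K * (b - s0)) / K - ln (\<eta> + K * (s0 - s0)) / K) {s0..b}"
    using \<open>s0 \<le> b\<close>
    by (intro fundamental_theorem_of_calculus)
      (auto simp: has_real_derivative_iff_has_vector_derivative[symmetric] intro: DERIV_subset)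
  then show ?thesis
    by (simp add: diff_divide_distrib)
qed

lemma transit_time_ge:
  fixes h g :: "real \<Rightarrow> real"
  assumes "a \<le> s0" "s0 < b"
    and cont_h: "continuous_on {a..b} h" and cont_g: "continuous_on {a..b} g"
    and h_pos: "\<And>s. s \<in> {a..b} \<Longrightarrow> 0 < h s" and h_le: "\<And>s. s \<in> {a..b} \<Longrightarrow> h s \<le> hM"
    and max: "\<And>s. s \<in> {a..b} \<Longrightarrow> g s \<le> g s0"
    and lip: "\<And>s. s \<in> {s0..b} \<Longrightarrow> g s0 - g s \<le> K * (s - s0)" and "K > 0" "\<eta> > 0"
  shows "(ln (\<eta> + K * (b - s0)) - ln \<eta>) / (K * hM) \<le> integral {a..b} (\<lambda>s. 1 / (h s * (g s0 + \<eta> - g s)))"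
proof -
  define f where "f s = 1 / (h s * (g s0 + \<eta> - g s))" for s
  have den_pos: "h s * (g s0 + \<eta> - g s) > 0" if "s \<in> {a..b}" for s
    using h_pos[OF that] max[OF that] \<open>\<eta> > 0\<close> by simp
  then have f_pos: "f s > 0" if "s \<in> {a..b}" for s
    using that by (simp add: f_def)
  have "continuous_on {a..b} f"
    unfolding f_def using cont_h cont_g den_pos
    by (intro continuous_on_divide continuous_intros) (auto simp: less_le)
  then have int: "f integrable_on {a..b}" "f integrable_on {s0..b}"
    using \<open>a \<le> s0\<close> by (auto intro!: integrable_continuous_interval elim!: continuous_on_subset)
  have affine: "((\<lambda>s. 1 / hM * (1 / (\<eta> + K * (s - s0)))) has_integral
      1 / hM * ((ln (\<eta> + K * (b - s0)) - ln \<eta>) / K)) {s0..b}"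
    using has_integral_inverse_affine[OF \<open>\<eta> > 0\<close> \<open>K > 0\<close>] \<open>s0 < b\<close> by (intro has_integral_mult_right) auto
  have "(ln (\<eta> + K * (b - s0)) - ln \<eta>) / (K * hM) = 1 / hM * ((ln (\<eta> + K * (b - s0)) - ln \<eta>) / K)"
    by simp
  also have "\<dots> \<le> integral {s0..b} f"
  proof (rule has_integral_le[OF affine integrable_integral[OF int(2)]])
    fix s assume s: "s \<in> {s0..b}"
    then have "s \<in> {a..b}" using \<open>a \<le> s0\<close> by auto
    have "h s * (g s0 + \<eta> - g s) \<le> hM * (\<eta> + K * (s - s0))"
      using h_le[OF \<open>s \<in> {a..b}\<close>] h_pos[OF \<open>s \<in> {a..b}\<close>] lip[OF s] max[OF \<open>s \<in> {a..b}\<close>] \<open>\<eta> > 0\<close>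
      by (intro mult_mono) auto
    then show "1 / hM * (1 / (\<eta> + K * (s - s0))) \<le> f s"
      using f_pos[OF \<open>s \<in> {a..b}\<close>] unfolding f_def by (simp add: frac_le)
  qed
  also have "\<dots> \<le> integral {a..b} f"
    using int f_pos \<open>a \<le> s0\<close> by (intro integral_subset_le) (auto intro: less_imp_le)
  finally show ?thesis
    unfolding f_def .
qed

lemma transit_time_unbounded:
  fixes h g :: "real \<Rightarrow> real"
  assumes s0: "a \<le> s0" "s0 < b"
    and cont_h: "continuous_on {a..b} h" and cont_g: "continuous_on {a..b} g"
    and h_pos: "\<And>s. s \<in> {a..b} \<Longrightarrow> 0 < h s" and h_le: "\<And>s. s \<in> {a..b} \<Longrightarrow> h s \<le> hM"
    and max: "\<And>s. s \<in> {a..b} \<Longrightarrow> g s \<le> g s0"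
    and lip: "\<And>s. s \<in> {s0..b} \<Longrightarrow> g s0 - g s \<le> K * (s - s0)" and "K > 0"
  obtains \<eta> where "\<eta> > 0" "N \<le> integral {a..b} (\<lambda>s. 1 / (h s * (g s0 + \<eta> - g s)))"
proof -
  have "hM > 0"
    using h_pos[of a] h_le[of a] s0 by force
  \<comment> \<open>Chosen to make the logarithmic bound of \<open>transit_time_ge\<close> at least \<open>\<bar>N\<bar>\<close>.\<close>
  define \<eta> where "\<eta> = K * (b - s0) * exp (- (\<bar>N\<bar> * K * hM))"
  have "\<eta> > 0"
    using \<open>K > 0\<close> s0 by (simp add: \<eta>_def)
  have "ln \<eta> = ln (K * (b - s0)) - \<bar>N\<bar> * (K * hM)"
    using \<open>K > 0\<close> s0 by (simp add: \<eta>_def ln_mult)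
  moreover have "ln (K * (b - s0)) \<le> ln (\<eta> + K * (b - s0))"
    using \<open>K > 0\<close> \<open>\<eta> > 0\<close> s0 by (intro ln_mono) auto
  moreover have "N * (K * hM) \<le> \<bar>N\<bar> * (K * hM)"
    using \<open>K > 0\<close> \<open>hM > 0\<close> by (intro mult_right_mono) auto
  ultimately have "N * (K * hM) \<le> ln (\<eta> + K * (b - s0)) - ln \<eta>"
    by linarith
  then have "N \<le> (ln (\<eta> + K * (b - s0)) - ln \<eta>) / (K * hM)"
    using \<open>K > 0\<close> \<open>hM > 0\<close> by (simp add: pos_le_divide_eq)
  also have "\<dots> \<le> integral {a..b} (\<lambda>s. 1 / (h s * (g s0 + \<eta> - g s)))"
    by (rule transit_time_ge[OF s0 cont_h cont_g h_pos h_le max lip \<open>K > 0\<close> \<open>\<eta> > 0\<close>])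
  finally show ?thesis
    using that \<open>\<eta> > 0\<close> by blast
qed

lemma transit_time_le:
  fixes h g :: "real \<Rightarrow> real"
  assumes "a \<le> b" and cont_h: "continuous_on {a..b} h" and cont_g: "continuous_on {a..b} g"
    and "hm > 0" and h_ge: "\<And>s. s \<in> {a..b} \<Longrightarrow> hm \<le> h s"
    and g_le: "\<And>s. s \<in> {a..b} \<Longrightarrow> g s \<le> G" and "G < D"
  shows "integral {a..b} (\<lambda>s. 1 / (h s * (D - g s))) \<le> (b - a) / (hm * (D - G))"
proof -
  have den_pos: "h s * (D - g s) > 0" if "s \<in> {a..b}" for s
    using h_ge[OF that] g_le[OF that] \<open>hm > 0\<close> \<open>G < D\<close> by simp
  have "integral {a..b} (\<lambda>s. 1 / (h s * (D - g s))) \<le> integral {a..b} (\<lambda>s. 1 / (hm * (D - G)))"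
  proof (rule integral_le)
    show "(\<lambda>s. 1 / (h s * (D - g s))) integrable_on {a..b}"
      using cont_h cont_g den_pos
      by (intro integrable_continuous_interval continuous_on_divide continuous_intros) (auto simp: less_le)
    show "1 / (h s * (D - g s)) \<le> 1 / (hm * (D - G))" if "s \<in> {a..b}" for s
      using \<open>hm > 0\<close> \<open>G < D\<close> h_ge[OF that] g_le[OF that] by (intro frac_le mult_mono) auto
  qed (intro integrable_continuous_interval continuous_intros)
  then show ?thesis
    using \<open>a \<le> b\<close> by simp
qed

lemma transit_time_continuous:
  fixes h g :: "real \<Rightarrow> real"
  assumes cont_h: "continuous_on {a..b} h" and cont_g: "continuous_on {a..b} g"
    and h_pos: "\<And>s. s \<in> {a..b} \<Longrightarrow> h s > 0" and g_less: "\<And>s. s \<in> {a..b} \<Longrightarrow> g s < D1"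
  shows "continuous_on {D1..D2} (\<lambda>D. integral {a..b} (\<lambda>s. 1 / (h s * (D - g s))))"
proof -
  have "continuous_on ({D1..D2} \<times> {a..b}) (\<lambda>p. h (snd p))"
    "continuous_on ({D1..D2} \<times> {a..b}) (\<lambda>p. g (snd p))"
    by (auto intro!: continuous_on_compose2[OF cont_h] continuous_on_compose2[OF cont_g]
        continuous_on_snd)
  moreover have "h s * (D - g s) > 0" if "s \<in> {a..b}" "D \<in> {D1..D2}" for D s
    using h_pos[OF that(1)] g_less[OF that(1)] that(2) by simp
  ultimately have "continuous_on ({D1..D2} \<times> {a..b}) (\<lambda>(D, s). 1 / (h s * (D - g s)))"
    unfolding case_prod_unfold by (intro continuous_on_divide continuous_intros) (force simp: less_le)+
  then show ?thesis
    unfolding cbox_interval[symmetric] by (rule integral_continuous_on_param)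
qed

lemma exists_maximum_left_of_right_end:
  fixes g :: "real \<Rightarrow> real"
  assumes "a < b" "continuous_on {a..b} g" "g a = g b"
  obtains s0 where "a \<le> s0" "s0 < b" "\<And>s. s \<in> {a..b} \<Longrightarrow> g s \<le> g s0"
proof -
  obtain s1 where s1: "s1 \<in> {a..b}" "\<And>s. s \<in> {a..b} \<Longrightarrow> g s \<le> g s1"
    using continuous_attains_sup[OF compact_Icc _ assms(2)] \<open>a < b\<close> by auto
  show ?thesis
  proof (cases "s1 = b")
    case True
    then show ?thesis
      using that[of a] s1 assms(1,3) by auto
  next
    case False
    then show ?thesis
      using that[of s1] s1 by auto
  qed
qed

lemma exists_transit_time:
  fixes h g :: "real \<Rightarrow> real"
  assumes "a < b" "len > 0"
    and cont_h: "continuous_on {a..b} h" and h_pos: "\<And>s. s \<in> {a..b} \<Longrightarrow> h s > 0"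
    and lip: "K-lipschitz_on {a..b} g" and "g a = g b"
  obtains D where "\<And>s. s \<in> {a..b} \<Longrightarrow> g s < D"
    "integral {a..b} (\<lambda>s. 1 / (h s * (D - g s))) = len"
proof -
  define T where "T D = integral {a..b} (\<lambda>s. 1 / (h s * (D - g s)))" for D
  have cont_g: "continuous_on {a..b} g"
    using lip by (rule lipschitz_on_continuous_on)
  obtain s0 where s0: "a \<le> s0" "s0 < b" and max: "\<And>s. s \<in> {a..b} \<Longrightarrow> g s \<le> g s0"
    using exists_maximum_left_of_right_end[OF \<open>a < b\<close> cont_g \<open>g a = g b\<close>] by blast
  obtain smin smax where "smin \<in> {a..b}" and h_min: "\<And>s. s \<in> {a..b} \<Longrightarrow> h smin \<le> h s"
    and "smax \<in> {a..b}" and h_max: "\<And>s. s \<in> {a..b} \<Longrightarrow> h s \<le> h smax"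
    using continuous_attains_inf[OF compact_Icc _ cont_h] continuous_attains_sup[OF compact_Icc _ cont_h]
      \<open>a < b\<close> by (metis atLeastatMost_empty_iff2 less_le_not_le)
  define hm where "hm = h smin"
  have "hm > 0"
    using h_pos \<open>smin \<in> {a..b}\<close> by (simp add: hm_def)
  define K' where "K' = \<bar>K\<bar> + 1"
  have "K' > 0"
    by (simp add: K'_def)
  have lip_s0: "g s0 - g s \<le> K' * (s - s0)" if "s \<in> {s0..b}" for s
  proof -
    have "g s0 - g s \<le> K * \<bar>s0 - s\<bar>"
      using lipschitz_onD[OF lip, of s0 s] that s0 by (auto simp: dist_real_def)
    also have "\<dots> \<le> K' * (s - s0)"
      using that by (auto simp: K'_def intro: mult_mono)
    finally show ?thesis .
  qed
  obtain \<eta> where "\<eta> > 0" and lower: "len \<le> T (g s0 + \<eta>)"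
    unfolding T_def by (rule transit_time_unbounded[OF s0 cont_h cont_g h_pos h_max max lip_s0 \<open>K' > 0\<close>])
  define D1 D2 where "D1 = g s0 + \<eta>" and "D2 = max D1 (g s0 + (b - a) / (hm * len))"
  have "T D2 \<le> (b - a) / (hm * (D2 - g s0))"
    unfolding T_def using \<open>a < b\<close> \<open>\<eta> > 0\<close> h_min
    by (intro transit_time_le[OF _ cont_h cont_g \<open>hm > 0\<close> _ max]) (auto simp: hm_def D2_def D1_def)
  also have "\<dots> \<le> len"
    using \<open>hm > 0\<close> \<open>len > 0\<close> \<open>a < b\<close> \<open>\<eta> > 0\<close>
    by (auto simp: D2_def D1_def divide_le_eq field_simps max_def)
  finally have upper: "T D2 \<le> len" .
  have below: "g s < D" if "s \<in> {a..b}" "D1 \<le> D" for s D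
    using max[OF that(1)] that(2) \<open>\<eta> > 0\<close> by (simp add: D1_def)
  have "continuous_on {D1..D2} T"
    unfolding T_def using below by (intro transit_time_continuous[OF cont_h cont_g h_pos]) auto
  then obtain D where "D1 \<le> D" "T D = len"
    using IVT2'[of T D2 len D1] upper lower by (auto simp: D1_def D2_def)
  then show ?thesis
    using that below unfolding T_def by blast
qed

lemma exists_increasing_bvp_solution:
  fixes h g :: "real \<Rightarrow> real"
  assumes "a < b" "c < d"
    and cont_h: "continuous_on {a..b} h" and h_pos: "\<And>s. s \<in> {a..b} \<Longrightarrow> h s > 0"
    and lip: "K-lipschitz_on {a..b} g" and "g a = g b"
  obtains D w where "continuous_on {c..d} w" "w c = a" "w d = b" "w ` {c..d} \<subseteq> {a..b}"
    "\<And>x. x \<in> {c<..<d} \<Longrightarrow> (w has_real_derivative h (w x) * (D - g (w x))) (at x)"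
proof -
  obtain D where below: "\<And>s. s \<in> {a..b} \<Longrightarrow> g s < D"
    and length: "integral {a..b} (\<lambda>s. 1 / (h s * (D - g s))) = d - c"
    using exists_transit_time[OF \<open>a < b\<close> _ cont_h h_pos lip \<open>g a = g b\<close>, of "d - c"] \<open>c < d\<close> by auto
  have den_pos: "h s * (D - g s) > 0" if "s \<in> {a..b}" for s
    using h_pos[OF that] below[OF that] by simp
  have "continuous_on {a..b} (\<lambda>s. 1 / (h s * (D - g s)))"
    using cont_h lipschitz_on_continuous_on[OF lip] den_pos
    by (intro continuous_on_divide continuous_intros) (metis less_irrefl)+
  moreover have "\<And>s. s \<in> {a..b} \<Longrightarrow> 1 / (h s * (D - g s)) > 0"
    using den_pos by simp
  ultimately obtain w where w: "continuous_on {c..d} w" "w c = a" "w d = b" "w ` {c..d} \<subseteq> {a..b}"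
    and ode: "\<And>x. x \<in> {c<..<d} \<Longrightarrow>
      (w has_real_derivative inverse (1 / (h (w x) * (D - g (w x))))) (at x)"
    using exists_autonomous_ode_solution[OF \<open>a < b\<close> _ _ length] by blast
  show ?thesis
    by (rule that[of w D]) (use w ode in simp_all)
qed

lemma exists_decreasing_bvp_solution:
  fixes h g :: "real \<Rightarrow> real"
  assumes "b < a" "c < d"
    and cont_h: "continuous_on {b..a} h" and h_pos: "\<And>s. s \<in> {b..a} \<Longrightarrow> h s > 0"
    and lip: "K-lipschitz_on {b..a} g" and "g a = g b"
  obtains D w where "continuous_on {c..d} w" "w c = a" "w d = b" "w ` {c..d} \<subseteq> {b..a}"
    "\<And>x. x \<in> {c<..<d} \<Longrightarrow> (w has_real_derivative h (w x) * (D - g (w x))) (at x)"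
proof -
  \<comment> \<open>Reflect \<open>s \<mapsto> -s\<close>: \<open>-w\<close> is an increasing solution for \<open>h (-s)\<close> and \<open>-g (-s)\<close>.\<close>
  have cont_h': "continuous_on {-a..-b} (\<lambda>s. h (- s))"
    by (rule continuous_on_compose2[OF cont_h]) (auto intro: continuous_intros)
  have lip': "K-lipschitz_on {-a..-b} (\<lambda>s. - g (- s))"
  proof (rule lipschitz_onI)
    show "dist (- g (- s)) (- g (- t)) \<le> K * dist s t" if "s \<in> {-a..-b}" "t \<in> {-a..-b}" for s t
      using lipschitz_onD[OF lip, of "- s" "- t"] that by (simp add: dist_real_def abs_minus_commute)
  qed (rule lipschitz_on_nonneg[OF lip])
  have h_pos': "h (- s) > 0" if "s \<in> {-a..-b}" for s
    using h_pos that by simp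
  have "- a < - b" and g_eq: "- g (- (- a)) = - g (- (- b))"
    using \<open>b < a\<close> \<open>g a = g b\<close> by simp_all
  then obtain D w where w: "continuous_on {c..d} w" "w c = - a" "w d = - b" "w ` {c..d} \<subseteq> {-a..-b}"
    and ode: "\<And>x. x \<in> {c<..<d} \<Longrightarrow> (w has_real_derivative h (- w x) * (D - - g (- w x))) (at x)"
    using exists_increasing_bvp_solution[OF _ \<open>c < d\<close> cont_h' h_pos' lip' g_eq] by metis
  show ?thesis
  proof (rule that[of "\<lambda>x. - w x" "- D"])
    show "((\<lambda>x. - w x) has_real_derivative h (- w x) * (- D - g (- w x))) (at x)"
      if "x \<in> {c<..<d}" for x
      using DERIV_minus[OF ode[OF that]] by (simp add: algebra_simps)
  qed (use w in \<open>auto intro: continuous_intros\<close>)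
qed

lemma exists_bvp_solution:
  fixes h g :: "real \<Rightarrow> real"
  assumes "c < d"
    and cont_h: "continuous_on (closed_segment a b) h"
    and h_pos: "\<And>s. s \<in> closed_segment a b \<Longrightarrow> h s > 0"
    and lip: "K-lipschitz_on (closed_segment a b) g" and "g a = g b"
  obtains D w where "continuous_on {c..d} w" "w c = a" "w d = b" "w ` {c..d} \<subseteq> closed_segment a b"
    "\<And>x. x \<in> {c<..<d} \<Longrightarrow> (w has_real_derivative h (w x) * (D - g (w x))) (at x)"
proof -
  consider "a < b" | "a = b" | "b < a"
    by linarith
  then show ?thesis
  proof cases
    case 1
    then have seg: "closed_segment a b = {a..b}"
      by (simp add: closed_segment_eq_real_ivl)
    show ?thesis
      using h_pos that unfolding seg
      by (rule exists_increasing_bvp_solution[OF 1 \<open>c < d\<close> cont_h[unfolded seg] _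
            lip[unfolded seg] \<open>g a = g b\<close>])
  next
    case 2
    show ?thesis
      by (rule that[of "\<lambda>_. a" "g a"]) (use 2 in auto)
  next
    case 3
    then have seg: "closed_segment a b = {b..a}"
      by (simp add: closed_segment_eq_real_ivl)
    show ?thesis
      using h_pos that unfolding seg
      by (rule exists_decreasing_bvp_solution[OF 3 \<open>c < d\<close> cont_h[unfolded seg] _
            lip[unfolded seg] \<open>g a = g b\<close>])
  qed
qed

text \<open>
  With \<open>v \<equiv> vm\<close> the momentum flux of \<open>stationary_solution\<close> is
  \<open>vm\<^sup>2 / u + P u + \<epsilon> \<nu>(u) vm u\<^sub>x / u\<^sup>2\<close>; setting it equal to \<open>C\<close> and solving for \<open>u\<^sub>x\<close> gives
  \<open>u\<^sub>x = stationary_rhs P \<nu> \<epsilon> vm C u\<close>.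
\<close>

definition stationary_rhs :: "(real \<Rightarrow> real) \<Rightarrow> (real \<Rightarrow> real) \<Rightarrow> real \<Rightarrow> real \<Rightarrow> real \<Rightarrow> real \<Rightarrow> real"
  where "stationary_rhs P \<nu> \<epsilon> vm C s = s\<^sup>2 / (\<epsilon> * vm * \<nu> s) * (C - (vm\<^sup>2 / s + P s))"

lemma flux_eq_iff_stationary_rhs:
  fixes P \<nu> :: "real \<Rightarrow> real"
  assumes "s \<noteq> 0" "\<epsilon> * vm * \<nu> s \<noteq> 0"
  shows "vm\<^sup>2 / s + P s - \<epsilon> * \<nu> s * (- (vm * U) / s\<^sup>2) = C \<longleftrightarrow> U = stationary_rhs P \<nu> \<epsilon> vm C s"
  using assms by (auto simp: stationary_rhs_def field_simps power2_eq_square)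

lemma DERIV_divide_numerator_deriv_zero:
  fixes u v :: "real \<Rightarrow> real"
  assumes "(v has_real_derivative 0) (at y)" "(u has_real_derivative U) (at y)" "u y \<noteq> 0"
  shows "((\<lambda>z. v z / u z) has_real_derivative - (v y * U) / (u y)\<^sup>2) (at y)"
  using DERIV_divide[OF assms] by (simp add: power2_eq_square)

lemma stationary_solution_momentum:
  assumes "l > 0" "stationary_solution P \<nu> \<epsilon> l um up vm u v" "x \<in> {-l..l}"
  shows "v x = vm"
  using assms DERIV_isconst2[of "-l" l v x] by (auto simp: stationary_solution_def)

lemma stationary_solution_imp_ode:
  fixes P \<nu> u v :: "real \<Rightarrow> real"
  assumes "l > 0" "\<epsilon> \<noteq> 0" "vm \<noteq> 0" and \<nu>_nonzero: "\<And>s. s > 0 \<Longrightarrow> \<nu> s \<noteq> 0"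
    and sol: "stationary_solution P \<nu> \<epsilon> l um up vm u v"
  obtains C where "\<And>x. x \<in> {-l<..<l} \<Longrightarrow> (u has_real_derivative stationary_rhs P \<nu> \<epsilon> vm C (u x)) (at x)"
proof -
  define \<Phi> where "\<Phi> y = (v y)\<^sup>2 / u y + P (u y) - \<epsilon> * \<nu> (u y) * deriv (\<lambda>z. v z / u z) y" for y
  have "\<exists>C. \<forall>y\<in>{-l<..<l}. \<Phi> y = C"
    using sol unfolding \<Phi>_def stationary_solution_def
    by (intro has_field_derivative_zero_constant) (auto intro: has_field_derivative_at_within)
  then obtain C where C: "\<And>y. y \<in> {-l<..<l} \<Longrightarrow> \<Phi> y = C"
    by blast
  show ?thesis
  proof (rule that)
    fix y assume y: "y \<in> {-l<..<l}"
    have "u y > 0" "v y = vm" "u differentiable (at y)" "(v has_real_derivative 0) (at y)"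
      using sol stationary_solution_momentum[OF \<open>l > 0\<close> sol, of y] y
      by (auto simp: stationary_solution_def)
    then have du: "(u has_real_derivative deriv u y) (at y)"
      by (simp add: DERIV_deriv_iff_real_differentiable)
    have "deriv (\<lambda>z. v z / u z) y = - (vm * deriv u y) / (u y)\<^sup>2"
      using DERIV_divide_numerator_deriv_zero[OF \<open>(v has_real_derivative 0) (at y)\<close> du] \<open>u y > 0\<close> \<open>v y = vm\<close>
      by (simp add: DERIV_imp_deriv)
    then have "vm\<^sup>2 / u y + P (u y) - \<epsilon> * \<nu> (u y) * (- (vm * deriv u y) / (u y)\<^sup>2) = C"
      using C[OF y] \<open>v y = vm\<close> by (simp add: \<Phi>_def)
    then have "deriv u y = stationary_rhs P \<nu> \<epsilon> vm C (u y)"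
      by (subst (asm) flux_eq_iff_stationary_rhs) (use \<open>u y > 0\<close> \<open>\<epsilon> \<noteq> 0\<close> \<open>vm \<noteq> 0\<close> \<nu>_nonzero in auto)
    then show "(u has_real_derivative stationary_rhs P \<nu> \<epsilon> vm C (u y)) (at y)"
      using du by simp
  qed
qed

lemma ode_imp_stationary_solution:
  fixes P \<nu> u :: "real \<Rightarrow> real"
  assumes "\<epsilon> \<noteq> 0" "vm \<noteq> 0" and \<nu>_nonzero: "\<And>s. s > 0 \<Longrightarrow> \<nu> s \<noteq> 0"
    and cont: "continuous_on {-l..l} u" and pos: "\<And>x. x \<in> {-l..l} \<Longrightarrow> u x > 0"
    and ode: "\<And>x. x \<in> {-l<..<l} \<Longrightarrow> (u has_real_derivative stationary_rhs P \<nu> \<epsilon> vm C (u x)) (at x)"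
    and "u (-l) = um" "u l = up"
  shows "stationary_solution P \<nu> \<epsilon> l um up vm u (\<lambda>_. vm)"
proof -
  have flux: "vm\<^sup>2 / u y + P (u y) - \<epsilon> * \<nu> (u y) * deriv (\<lambda>z. vm / u z) y = C"
    if y: "y \<in> {-l<..<l}" for y
  proof -
    have "u y > 0"
      using pos y by auto
    then have "deriv (\<lambda>z. vm / u z) y = - (vm * stationary_rhs P \<nu> \<epsilon> vm C (u y)) / (u y)\<^sup>2"
      using DERIV_divide_numerator_deriv_zero[OF DERIV_const ode[OF y]] by (simp add: DERIV_imp_deriv)
    then show ?thesis
      by (simp only:) (subst flux_eq_iff_stationary_rhs; use \<open>u y > 0\<close> \<open>\<epsilon> \<noteq> 0\<close> \<open>vm \<noteq> 0\<close> \<nu>_nonzero in auto)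
  qed
  have "((\<lambda>y. vm\<^sup>2 / u y + P (u y) - \<epsilon> * \<nu> (u y) * deriv (\<lambda>z. vm / u z) y) has_real_derivative 0) (at x)"
    if "x \<in> {-l<..<l}" for x
    using flux that by (intro has_field_derivative_transform_within_open[OF DERIV_const, where S = "{-l<..<l}"]) auto
  moreover have "u differentiable (at x)" if "x \<in> {-l<..<l}" for x
    using ode[OF that] real_differentiable_def by blast
  ultimately show ?thesis
    using assms unfolding stationary_solution_def by auto
qed

lemma inviscid_flux_C1:
  assumes "P C1_differentiable_on {0<..}"
  shows "(\<lambda>s. vm\<^sup>2 / s + P s) C1_differentiable_on {0<..}"
  by (rule C1_differentiable_on_add[OF C1_differentiable_on_divide assms]) auto

lemma stationary_rhs_C1:
  assumes "P C1_differentiable_on {0<..}" "\<nu> C1_differentiable_on {0<..}"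
    and "\<epsilon> \<noteq> 0" "vm \<noteq> 0" "\<And>s. s > 0 \<Longrightarrow> \<nu> s \<noteq> 0"
  shows "stationary_rhs P \<nu> \<epsilon> vm C C1_differentiable_on {0<..}"
  unfolding stationary_rhs_def[abs_def] power2_eq_square
  by (rule C1_differentiable_on_mult C1_differentiable_on_divide C1_differentiable_on_diff
      C1_differentiable_on_const C1_differentiable_on_ident
      inviscid_flux_C1[unfolded power2_eq_square] assms
      | use assms in simp)+

lemma stationary_rhs_strict_mono:
  assumes "\<epsilon> > 0" "vm > 0" "\<nu> s > 0" "s > 0" "C < C'"
  shows "stationary_rhs P \<nu> \<epsilon> vm C s < stationary_rhs P \<nu> \<epsilon> vm C' s"
  using assms unfolding stationary_rhs_def by (intro mult_strict_left_mono) auto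

lemma exists_stationary_solution:
  fixes P \<nu> :: "real \<Rightarrow> real"
  assumes "l > 0" "\<epsilon> > 0" "vm > 0" "um > 0" "up > 0"
    and P_C1: "P C1_differentiable_on {0<..}"
    and \<nu>_cont: "continuous_on {0<..} \<nu>" and \<nu>_pos: "\<And>s. s > 0 \<Longrightarrow> \<nu> s > 0"
    and RH: "vm\<^sup>2 / um + P um = vm\<^sup>2 / up + P up"
  obtains u where "stationary_solution P \<nu> \<epsilon> l um up vm u (\<lambda>_. vm)"
proof -
  define h where "h = (\<lambda>s. s\<^sup>2 / (\<epsilon> * vm * \<nu> s))"
  define g where "g = (\<lambda>s. vm\<^sup>2 / s + P s)"
  have segment: "closed_segment um up \<subseteq> {0<..}"
    using \<open>um > 0\<close> \<open>up > 0\<close> by (auto simp: closed_segment_eq_real_ivl split: if_splits)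
  have "continuous_on (closed_segment um up) h"
    unfolding h_def using \<nu>_pos \<open>\<epsilon> > 0\<close> \<open>vm > 0\<close> segment
    by (intro continuous_intros continuous_on_subset[OF \<nu>_cont]) force+
  moreover have "h s > 0" if "s \<in> closed_segment um up" for s
    unfolding h_def using \<nu>_pos \<open>\<epsilon> > 0\<close> \<open>vm > 0\<close> segment that by force
  moreover obtain K where "K-lipschitz_on (closed_segment um up) g"
    unfolding g_def
    by (rule C1_differentiable_on_imp_lipschitz_on[OF inviscid_flux_C1[OF P_C1] compact_segment
          convex_closed_segment segment])
  moreover have "g um = g up" and "- l < l"
    using RH \<open>l > 0\<close> by (simp_all add: g_def)
  ultimately obtain C u where u: "continuous_on {-l..l} u" "u (-l) = um" "u l = up"
    and range: "u ` {-l..l} \<subseteq> closed_segment um up"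
    and ode: "\<And>x. x \<in> {-l<..<l} \<Longrightarrow> (u has_real_derivative h (u x) * (C - g (u x))) (at x)"
    using exists_bvp_solution[of "-l" l um up h K g] by metis
  have "h s * (C - g s) = stationary_rhs P \<nu> \<epsilon> vm C s" for s
    by (simp add: h_def g_def stationary_rhs_def)
  moreover have "u x > 0" if "x \<in> {-l..l}" for x
    using range segment that by (auto simp: image_subset_iff subset_eq)
  ultimately have "stationary_solution P \<nu> \<epsilon> l um up vm u (\<lambda>_. vm)"
    using ode \<nu>_pos \<open>\<epsilon> > 0\<close> \<open>vm > 0\<close>
    by (intro ode_imp_stationary_solution[OF _ _ _ u(1) _ _ u(2,3)]) (auto simp: less_le)
  then show ?thesis
    by (rule that)
qed

lemma stationary_solution_unique:
  fixes P \<nu> :: "real \<Rightarrow> real"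
  assumes "l > 0" "\<epsilon> > 0" "vm > 0"
    and P_C1: "P C1_differentiable_on {0<..}"
    and \<nu>_C1: "\<nu> C1_differentiable_on {0<..}" and \<nu>_pos: "\<And>s. s > 0 \<Longrightarrow> \<nu> s > 0"
    and sol1: "stationary_solution P \<nu> \<epsilon> l um up vm u1 v1"
    and sol2: "stationary_solution P \<nu> \<epsilon> l um up vm u2 v2"
    and x: "x \<in> {-l..l}"
  shows "u1 x = u2 x" "v1 x = v2 x"
proof -
  have nonzero: "\<epsilon> \<noteq> 0" "vm \<noteq> 0" "\<And>s. s > 0 \<Longrightarrow> \<nu> s \<noteq> 0"
    using \<open>\<epsilon> > 0\<close> \<open>vm > 0\<close> \<nu>_pos by (auto simp: less_le)
  obtain C1 C2
    where ode1: "\<And>x. x \<in> {-l<..<l} \<Longrightarrow> (u1 has_real_derivative stationary_rhs P \<nu> \<epsilon> vm C1 (u1 x)) (at x)"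
      and ode2: "\<And>x. x \<in> {-l<..<l} \<Longrightarrow> (u2 has_real_derivative stationary_rhs P \<nu> \<epsilon> vm C2 (u2 x)) (at x)"
    using stationary_solution_imp_ode[OF \<open>l > 0\<close> nonzero sol1]
      stationary_solution_imp_ode[OF \<open>l > 0\<close> nonzero sol2] by metis
  have cont: "continuous_on {0<..} (stationary_rhs P \<nu> \<epsilon> vm C)" for C
    using stationary_rhs_C1[OF P_C1 \<nu>_C1 nonzero]
    by (auto intro: differentiable_imp_continuous_on C1_diff_imp_diff)
  have lip: "\<exists>L. L-lipschitz_on {m..M} (stationary_rhs P \<nu> \<epsilon> vm C)" if "m > 0" for C m M
  proof -
    have "{m..M} \<subseteq> {0<..}"
      using that by auto
    then obtain L where "L-lipschitz_on {m..M} (stationary_rhs P \<nu> \<epsilon> vm C)"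
      using C1_differentiable_on_imp_lipschitz_on[OF stationary_rhs_C1[OF P_C1 \<nu>_C1 nonzero]
            compact_Icc convex_real_interval(5)] by blast
    then show ?thesis ..
  qed
  have mono: "stationary_rhs P \<nu> \<epsilon> vm C s < stationary_rhs P \<nu> \<epsilon> vm C' s" if "C < C'" "s > 0" for C C' s
    using that \<open>\<epsilon> > 0\<close> \<open>vm > 0\<close> \<nu>_pos by (intro stationary_rhs_strict_mono) auto
  have "- l < l"
    using \<open>l > 0\<close> by simp
  from sol1 sol2 show "u1 x = u2 x"
    unfolding stationary_solution_def
    by (elim conjE, intro monotone_family_bvp_unique[OF \<open>- l < l\<close> mono cont lip _ _ _ _ ode1 ode2 _ _ x])
      simp_all
  show "v1 x = v2 x"
    using stationary_solution_momentum[OF \<open>l > 0\<close> sol1 x] stationary_solution_momentum[OF \<open>l > 0\<close> sol2 x]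
    by simp
qed

theorem theorem1p2:
  fixes P P' P'' \<nu> \<nu>' :: "real \<Rightarrow> real"
    and l \<epsilon> um up vm vs :: real
  assumes l_pos: "l > 0" and eps_pos: "\<epsilon> > 0"
    and vm_pos: "vm > 0" and um_pos: "um > 0" and up_pos: "up > 0"
    and vs_def: "vs = vm"
    and P0: "P 0 = 0"
    and P_cont0: "continuous_on {0..} P"
    and P_infty: "filterlim P at_top at_top"
    and P_deriv: "\<And>u. u > 0 \<Longrightarrow> (P has_real_derivative P' u) (at u)"
    and P'_deriv: "\<And>u. u > 0 \<Longrightarrow> (P' has_real_derivative P'' u) (at u)"
    and P''_cont: "continuous_on {0<..} P''"
    and P'_pos: "\<And>u. u > 0 \<Longrightarrow> P' u > 0"
    and P''_pos: "\<And>u. u > 0 \<Longrightarrow> P'' u > 0"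
    and nu_deriv: "\<And>u. u > 0 \<Longrightarrow> (\<nu> has_real_derivative \<nu>' u) (at u)"
    and nu'_cont: "continuous_on {0<..} \<nu>'"
    and nu_pos: "\<And>u. u > 0 \<Longrightarrow> \<nu> u > 0"
    and f_welldef: "\<And>u. u > 0 \<Longrightarrow> (\<lambda>z. P z / z\<^sup>2) integrable_on {0..u}"
    and RH: "vs\<^sup>2 * (up - um) = um * up * (P up - P um)"
    and entropy: "(vs ^ 3 / (2 * up\<^sup>2) + vs * deriv (f_of P) up)
                  - (vs ^ 3 / (2 * um\<^sup>2) + vs * deriv (f_of P) um) \<le> 0"
  shows "\<exists>ub vb. stationary_solution P \<nu> \<epsilon> l um up vm ub vb \<and>
           (\<forall>u v. stationary_solution P \<nu> \<epsilon> l um up vm u v \<longrightarrow>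
              (\<forall>x\<in>{-l..l}. u x = ub x \<and> v x = vb x))"
proof -
  have P_C1: "P C1_differentiable_on {0<..}"
    using P_deriv P'_deriv
    by (intro C1_differentiable_onI[of _ _ P'] continuous_at_imp_continuous_on) (auto dest: DERIV_isCont)
  have \<nu>_C1: "\<nu> C1_differentiable_on {0<..}"
    using nu_deriv nu'_cont by (intro C1_differentiable_onI) auto
  have \<nu>_cont: "continuous_on {0<..} \<nu>"
    using \<nu>_C1 by (intro differentiable_imp_continuous_on C1_diff_imp_diff)
  have equal_flux: "vm\<^sup>2 / um + P um = vm\<^sup>2 / up + P up"
    using RH um_pos up_pos unfolding vs_def by (simp add: field_simps)
  obtain ub where ub: "stationary_solution P \<nu> \<epsilon> l um up vm ub (\<lambda>_. vm)"
    using exists_stationary_solution[OF l_pos eps_pos vm_pos um_pos up_pos P_C1 \<nu>_cont nu_pos equal_flux] .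
  show ?thesis
  proof (intro exI conjI allI impI ballI)
    fix u v x assume "stationary_solution P \<nu> \<epsilon> l um up vm u v" "x \<in> {-l..l}"
    then show "u x = ub x" "v x = vm"
      using stationary_solution_unique[OF l_pos eps_pos vm_pos P_C1 \<nu>_C1 nu_pos _ ub] by blast+
  qed (rule ub)
qed

end
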